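(* Let $\mathbb{K}$ be either $\mathbb{R}$ or $\mathbb{C}$, with all coefficients and solutions in $\mathbb{K}$. Let $D$ be a positive integer and let $1 \le D < q \le \infty$. For all $k\in\{1,\dots,D\}$ let $\mathcal{D}_k = \{(d_1,\dots,d_k)\in\mathbb{N}^k : d_1+\cdots+d_k\le D\}$. Let $I$ be an infinite set and $\mathbf{x} = (x_j)_{j=1}^\infty$. For all $i\in I$ and $d\in\{1,\dots,D\}$ let $\mathbf{a}_{i,d} = (a_{i,d,j})_{j=1}^\infty \in \ell^{q/(q-d)}$ and $(\mathbf{a}_{i,d},\mathbf{x}^d) = \sum_{j=1}^\infty a_{i,d,j} x_j^d$. For all $i\in I$ define the multiplicative polynomial \[ P_i(\mathbf{x}) = \sum_{k=1}^{D}\sum_{(d_1,\dots,d_k)\in\mathcal{D}_k} (\mathbf{a}_{i,d_1},\mathbf{x}^{d_1})(\mathbf{a}_{i,d_2},\mathbf{x}^{d_2})\cdots(\mathbf{a}_{i,d_k},\mathbf{x}^{d_k}) \] (equivalently $\sum_{k=1}^D\sum_{\Delta\in\mathcal{D}_k}\sum_{J\in\mathbb{N}^k} a_{i,\Delta,J}x_J^\Delta$ with multiplicative coefficients $a_{i,(d_1,\dots,d_k),(j_1,\dots,j_k)} = a_{i,d_1,j_1}\cdots a_{i,d_k,j_k}$ and $x_J^\Delta = x_{j_1}^{d_1}\cdots x_{j_k}^{d_k}$). Let $M>0$ and $\mathbf{b} = (b_i)_{i\in I}$ with $b_i\in\mathbb{K}$. If for every $\varepsilon>0$ and every finite subset $S$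 of $I$ the finite set of inequalities $\{|P_i(\mathbf{x}) - b_i| \le \varepsilon : i\in S\}$ has a solution $\mathbf{x}_{S,\varepsilon}\in\ell^q$ with $\|\mathbf{x}_{S,\varepsilon}\|_q\le M$, then the infinite set of equations $\{P_i(\mathbf{x}) = b_i : i\in I\}$ has an exact solution $\mathbf{x}\in\ell^q$ with $\|\mathbf{x}\|_q\le M$.
   Context: $\mathbb{N}=\{1,2,3,\dots\}$. For $q=\infty$ one sets $q/(q-d)=1$ and $q/d=\infty$. $\ell^p$ ($1\le p<\infty$) denotes sequences with $\|\mathbf{a}\|_p=(\sum_j|a_j|^p)^{1/p}<\infty$ and $\ell^\infty$ bounded sequences with the sup norm; $\mathbf{x}^d=(x_j^d)_{j\ge1}$. For $\mathbf{x}\in\ell^q$ each series $(\mathbf{a}_{i,d},\mathbf{x}^d)$ converges absolutely by Hölder's inequality. *)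

theory Defs
  imports "HOL-Analysis.Analysis"
begin

text \<open>Sequences are indexed by nat (index 0 plays the role of index 1 of the paper).
  Exponents p are extended reals; p = \<infinity> means the sup-norm space.\<close>

definition in_lp :: "ereal \<Rightarrow> (nat \<Rightarrow> 'a::real_normed_vector) \<Rightarrow> bool" where
  "in_lp p x = (if p = \<infinity> then bdd_above (range (\<lambda>j. norm (x j)))
                else summable (\<lambda>j. norm (x j) powr real_of_ereal p))"

definition lp_norm :: "ereal \<Rightarrow> (nat \<Rightarrow> 'a::real_normed_vector) \<Rightarrow> real" where
  "lp_norm p x = (if p = \<infinity> then (SUP j. norm (x j))
                  else (\<Sum>j. norm (x j) powr real_of_ereal p) powr (1 / real_of_ereal p))"

definition conj_exp :: "ereal \<Rightarrow> nat \<Rightarrow> ereal" where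
  "conj_exp q d = (if q = \<infinity> then 1
                   else ereal (real_of_ereal q / (real_of_ereal q - real d)))"

definition pairing :: "(nat \<Rightarrow> 'a::real_normed_field) \<Rightarrow> (nat \<Rightarrow> 'a) \<Rightarrow> nat \<Rightarrow> 'a" where
  "pairing a x d = (\<Sum>j. a j * x j ^ d)"

definition tuples :: "nat \<Rightarrow> nat \<Rightarrow> nat list set" where
  "tuples D k = {ds. length ds = k \<and> (\<forall>d\<in>set ds. 1 \<le> d) \<and> sum_list ds \<le> D}"

definition mult_poly :: "nat \<Rightarrow> (nat \<Rightarrow> nat \<Rightarrow> 'a::real_normed_field) \<Rightarrow> (nat \<Rightarrow> 'a) \<Rightarrow> 'a" where
  "mult_poly D a x = (\<Sum>k\<in>{1..D}. \<Sum>ds\<in>tuples D k. prod_list (map (\<lambda>d. pairing (a d) x d) ds))"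

end

theory Submission
  imports Defs
begin

text \<open>The closed ball of radius M in \<open>\<ell>\<^sup>q\<close> is compact for the topology of coordinatewise
  convergence (the product topology that \<open>nat \<Rightarrow> 'a\<close> carries), being a closed subset of the
  product of the compact balls \<open>|x\<^sub>j| \<le> M\<close>. On this ball every pairing \<open>(a, x\<^sup>d)\<close> is the
  uniform limit of its continuous partial sums: for \<open>q = \<infinity>\<close> by comparison with
  \<open>\<Sum> |a\<^sub>j| M\<^sup>d\<close>, and for finite \<open>q\<close> because Young's inequality
  \<open>|a\<^sub>j| |x\<^sub>j|\<^sup>d \<le> C\<^sub>\<delta> |a\<^sub>j|\<^sup>p + \<delta> |x\<^sub>j|\<^sup>q\<close> with \<open>p = q/(q-d)\<close> makes the tails uniformly
  small. Hence every \<open>P\<^sub>i\<close> is continuous on the ball, the sets \<open>{x. |P\<^sub>i x - b\<^sub>i| \<le> \<epsilon>}\<close>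
  are closed in it and have the finite intersection property, and a point common to all
  of them solves every equation exactly.\<close>

definition lp_ball :: "ereal \<Rightarrow> real \<Rightarrow> (nat \<Rightarrow> 'a::real_normed_vector) set" where
  "lp_ball q M = {x. in_lp q x \<and> lp_norm q x \<le> M}"

lemma lp_ball_infinity: "lp_ball \<infinity> M = {x. \<forall>j. norm (x j) \<le> M}"
proof -
  have "bdd_above (range (\<lambda>j. norm (x j))) \<and> (SUP j. norm (x j)) \<le> M \<longleftrightarrow> (\<forall>j. norm (x j) \<le> M)"
    for x :: "nat \<Rightarrow> 'a"
    by (meson UNIV_I bdd_aboveI2 cSUP_least cSUP_upper order_trans UNIV_not_empty)
  then show ?thesis
    by (simp add: lp_ball_def in_lp_def lp_norm_def)
qed

lemma lp_ball_ereal: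
  assumes r: "r > 0" and M: "M \<ge> 0"
  shows "lp_ball (ereal r) M = {x. \<forall>n. (\<Sum>j<n. norm (x j) powr r) \<le> M powr r}"
proof (intro set_eqI iffI; simp)
  fix x :: "nat \<Rightarrow> 'a"
  assume "x \<in> lp_ball (ereal r) M"
  then have s: "summable (\<lambda>j. norm (x j) powr r)"
    and le: "(\<Sum>j. norm (x j) powr r) powr (1/r) \<le> M"
    by (simp_all add: lp_ball_def in_lp_def lp_norm_def)
  have nn: "(\<Sum>j. norm (x j) powr r) \<ge> 0"
    by (intro suminf_nonneg s) auto
  have "(\<Sum>j. norm (x j) powr r) = ((\<Sum>j. norm (x j) powr r) powr (1/r)) powr r"
    using nn r by (simp add: powr_powr)
  also have "\<dots> \<le> M powr r"
    using le r nn by (intro powr_mono2) auto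
  finally show "\<forall>n. (\<Sum>j<n. norm (x j) powr r) \<le> M powr r"
    using sum_le_suminf[OF s] by (meson finite_lessThan order_trans powr_ge_zero)
next
  fix x :: "nat \<Rightarrow> 'a"
  assume partial: "\<forall>n. (\<Sum>j<n. norm (x j) powr r) \<le> M powr r"
  then have s: "summable (\<lambda>j. norm (x j) powr r)"
    by (intro summableI_nonneg_bounded) auto
  have nn: "(\<Sum>j. norm (x j) powr r) \<ge> 0"
    by (intro suminf_nonneg s) auto
  have "(\<Sum>j. norm (x j) powr r) powr (1/r) \<le> (M powr r) powr (1/r)"
    using partial s nn r by (intro powr_mono2 suminf_le_const) auto
  also have "\<dots> = M"
    using M r by (simp add: powr_powr)
  finally show "x \<in> lp_ball (ereal r) M"
    using s by (simp add: lp_ball_def in_lp_def lp_norm_def)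
qed

lemma lp_ball_subset_lp_ball_infinity:
  assumes "q > 0" and M: "M \<ge> 0"
  shows "lp_ball q M \<subseteq> lp_ball \<infinity> M"
proof (cases q)
  case (real r)
  with assms have r: "r > 0" by simp
  show ?thesis
  proof (clarsimp simp: lp_ball_infinity)
    fix x :: "nat \<Rightarrow> 'a" and j
    assume "x \<in> lp_ball q M"
    then have "(\<Sum>k<Suc j. norm (x k) powr r) \<le> M powr r"
      using r M by (simp add: real lp_ball_ereal del: sum.lessThan_Suc)
    moreover have "norm (x j) powr r \<le> (\<Sum>k<Suc j. norm (x k) powr r)"
      by (rule member_le_sum) auto
    ultimately have "norm (x j) powr r \<le> M powr r"
      by linarith
    then show "norm (x j) \<le> M"
      using r M by (meson not_le powr_less_mono2)
  qed
qed (use assms in auto)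

lemma compact_lp_ball_infinity:
  "compact (lp_ball \<infinity> M :: (nat \<Rightarrow> 'a::{real_normed_vector,heine_borel}) set)"
proof -
  have "compactin (product_topology (\<lambda>_. euclidean) UNIV) (PiE UNIV (\<lambda>_. cball (0::'a) M))"
    by (simp add: compactin_PiE)
  moreover have "PiE UNIV (\<lambda>_. cball (0::'a) M) = lp_ball \<infinity> M"
    by (auto simp: lp_ball_infinity PiE_def extensional_def)
  ultimately show ?thesis
    by (metis compactin_euclidean_iff euclidean_product_topology)
qed

lemma closed_lp_ball:
  assumes "q > 0" and M: "M \<ge> 0"
  shows "closed (lp_ball q M :: (nat \<Rightarrow> 'a::real_normed_vector) set)"
proof (cases q)
  case (real r)
  with assms have r: "r > 0" by simp
  have "continuous_on UNIV (\<lambda>x :: nat \<Rightarrow> 'a. \<Sum>j<n. norm (x j) powr r)" for n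
    using r by (intro continuous_on_sum continuous_on_powr' continuous_on_norm
        continuous_on_product_coordinates continuous_on_const) auto
  then show ?thesis
    unfolding real lp_ball_ereal[OF r M]
    by (intro closed_Collect_all closed_Collect_le continuous_on_const)
next
  case PInf
  then show ?thesis
    unfolding PInf lp_ball_infinity
    by (intro closed_Collect_all closed_Collect_le continuous_on_norm
        continuous_on_product_coordinates continuous_on_const)
qed (use assms in auto)

lemma compact_lp_ball:
  assumes "q > 0" and "M \<ge> 0"
  shows "compact (lp_ball q M :: (nat \<Rightarrow> 'a::{real_normed_vector,heine_borel}) set)"
proof -
  have "compact (lp_ball \<infinity> M \<inter> lp_ball q M :: (nat \<Rightarrow> 'a) set)"
    using assms by (intro compact_Int_closed compact_lp_ball_infinity closed_lp_ball)
  moreover have "lp_ball q M \<subseteq> (lp_ball \<infinity> M :: (nat \<Rightarrow> 'a) set)"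
    using assms by (rule lp_ball_subset_lp_ball_infinity)
  ultimately show ?thesis
    by (simp add: Int_absorb1)
qed

lemma continuous_on_suminf_uniformly_small_tails:
  fixes f :: "nat \<Rightarrow> 'a::topological_space \<Rightarrow> 'b::banach"
  assumes cont: "\<And>j. continuous_on B (f j)"
    and tails: "\<And>e. e > 0 \<Longrightarrow> \<exists>N. \<forall>x\<in>B. \<forall>m\<ge>N. \<forall>n. (\<Sum>j\<in>{m..<n}. norm (f j x)) < e"
  shows "continuous_on B (\<lambda>x. \<Sum>j. f j x)"
proof -
  have tail_sums: "\<exists>N. \<forall>x\<in>B. \<forall>m\<ge>N. \<forall>n. norm (\<Sum>j\<in>{m..<n}. f j x) < e" if "e > 0" for e
    using tails[OF that] by (blast intro: order.strict_trans1[OF norm_sum])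
  have "uniformly_Cauchy_on B (\<lambda>n x. \<Sum>j<n. f j x)"
  proof (rule uniformly_Cauchy_onI')
    fix e :: real
    assume "e > 0"
    then obtain N where N: "\<forall>x\<in>B. \<forall>m\<ge>N. \<forall>n. norm (\<Sum>j\<in>{m..<n}. f j x) < e"
      using tail_sums by blast
    have "dist (\<Sum>j<m. f j x) (\<Sum>j<n. f j x) < e" if "x \<in> B" "N \<le> m" "m < n" for x m n
    proof -
      have "(\<Sum>j<n. f j x) - (\<Sum>j<m. f j x) = (\<Sum>j\<in>{m..<n}. f j x)"
        using \<open>m < n\<close> by (simp add: sum_diff_nat_ivl flip: atLeast0LessThan)
      then show ?thesis
        using N that by (metis dist_commute dist_norm)
    qed
    then show "\<exists>N. \<forall>x\<in>B. \<forall>m\<ge>N. \<forall>n>m. dist (\<Sum>j<m. f j x) (\<Sum>j<n. f j x) < e"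
      by blast
  qed
  then obtain l where l: "uniform_limit B (\<lambda>n x. \<Sum>j<n. f j x) l sequentially"
    using Cauchy_uniformly_convergent uniformly_convergent_on_def by blast
  have "continuous_on B l"
    by (rule uniform_limit_theorem[OF _ l]) (auto intro!: always_eventually continuous_on_sum cont)
  moreover have "l x = (\<Sum>j. f j x)" if x: "x \<in> B" for x
  proof (rule LIMSEQ_unique)
    show "(\<lambda>n. \<Sum>j<n. f j x) \<longlonglongrightarrow> l x"
      using l x by (rule tendsto_uniform_limitI)
    have "summable (\<lambda>j. f j x)"
      unfolding summable_Cauchy using tail_sums x by meson
    then show "(\<lambda>n. \<Sum>j<n. f j x) \<longlonglongrightarrow> (\<Sum>j. f j x)"
      by (rule summable_LIMSEQ)
  qed
  ultimately show ?thesis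
    by (rule continuous_on_eq)
qed

lemma Youngs_inequality_weighted:
  fixes p p' \<delta> :: real
  assumes p: "p > 1" "p' > 1" "1/p + 1/p' = 1" and \<delta>: "\<delta> > 0"
  obtains C where "C \<ge> 0" and "\<And>\<alpha> \<beta>. \<alpha> \<ge> 0 \<Longrightarrow> \<beta> \<ge> 0 \<Longrightarrow> \<alpha> * \<beta> \<le> C * \<alpha> powr p + \<delta> * \<beta> powr p'"
proof
  define s where "s = \<delta> powr (1/p')"
  have s: "s > 0" and s_p': "s powr p' = \<delta>"
    using \<delta> p by (simp_all add: s_def powr_powr)
  show "inverse (s powr p) \<ge> 0"
    by simp
  fix \<alpha> \<beta> :: real
  assume "\<alpha> \<ge> 0" "\<beta> \<ge> 0"
  have "\<alpha> * \<beta> = (\<alpha> / s) * (s * \<beta>)"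
    using s by simp
  also have "\<dots> \<le> (\<alpha> / s) powr p / p + (s * \<beta>) powr p' / p'"
    using p s \<open>\<alpha> \<ge> 0\<close> \<open>\<beta> \<ge> 0\<close> by (intro Youngs_inequality) auto
  also have "\<dots> \<le> (\<alpha> / s) powr p + (s * \<beta>) powr p'"
    using p by (intro add_mono divide_left_mono[where b = 1, simplified]) auto
  also have "\<dots> = inverse (s powr p) * \<alpha> powr p + \<delta> * \<beta> powr p'"
    using s \<open>\<alpha> \<ge> 0\<close> \<open>\<beta> \<ge> 0\<close> by (simp add: powr_divide powr_mult s_p' inverse_eq_divide)
  finally show "\<alpha> * \<beta> \<le> inverse (s powr p) * \<alpha> powr p + \<delta> * \<beta> powr p'" .
qed

lemma lp_ball_infinity_pairing_tails:
  fixes a :: "nat \<Rightarrow> 'a::real_normed_field"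
  assumes a: "summable (\<lambda>j. norm (a j))" and M: "M \<ge> 0" and e: "e > 0"
  shows "\<exists>N. \<forall>x\<in>lp_ball \<infinity> M. \<forall>m\<ge>N. \<forall>n. (\<Sum>j\<in>{m..<n}. norm (a j * x j ^ d)) < e"
proof -
  have Md: "M ^ d + 1 > 0"
    using M by (simp add: add_nonneg_pos)
  then obtain N where N: "\<forall>m\<ge>N. \<forall>n. (\<Sum>j\<in>{m..<n}. norm (a j)) < e / (M ^ d + 1)"
    using a[unfolded summable_Cauchy, rule_format, of "e / (M ^ d + 1)"] e
    by (auto simp: sum_nonneg)
  have "(\<Sum>j\<in>{m..<n}. norm (a j * x j ^ d)) < e"
    if x: "x \<in> lp_ball \<infinity> M" and m: "m \<ge> N" for x m n
  proof -
    have "(\<Sum>j\<in>{m..<n}. norm (a j * x j ^ d)) \<le> (\<Sum>j\<in>{m..<n}. norm (a j)) * M ^ d"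
      using x by (auto simp: lp_ball_infinity norm_mult norm_power sum_distrib_right
          intro!: sum_mono mult_left_mono power_mono)
    also have "\<dots> \<le> (\<Sum>j\<in>{m..<n}. norm (a j)) * (M ^ d + 1)"
      by (intro mult_left_mono) (auto intro: sum_nonneg)
    also have "\<dots> < e"
      using N m Md by (simp add: pos_less_divide_eq)
    finally show ?thesis .
  qed
  then show ?thesis
    by blast
qed

lemma lp_ball_ereal_pairing_tails:
  fixes a :: "nat \<Rightarrow> 'a::real_normed_field"
  assumes d: "1 \<le> d" "real d < r" and M: "M \<ge> 0" and e: "e > 0"
    and a: "summable (\<lambda>j. norm (a j) powr (r / (r - d)))"
  shows "\<exists>N. \<forall>x\<in>lp_ball (ereal r) M. \<forall>m\<ge>N. \<forall>n. (\<Sum>j\<in>{m..<n}. norm (a j * x j ^ d)) < e"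
proof -
  define p where "p = r / (r - d)"
  define \<delta> where "\<delta> = e / (2 * (M powr r + 1))"
  have r: "r > 0"
    using d by linarith
  have Mr: "M powr r + 1 > 0"
    by (simp add: add_nonneg_pos)
  then have \<delta>: "\<delta> > 0"
    using e by (simp add: \<delta>_def)
  have "p > 1" "r / d > 1" "1 / p + 1 / (r / d) = 1"
    using d by (simp_all add: p_def field_simps)
  then obtain C where C: "C \<ge> 0"
    and young: "\<And>\<alpha> \<beta>. \<alpha> \<ge> 0 \<Longrightarrow> \<beta> \<ge> 0 \<Longrightarrow> \<alpha> * \<beta> \<le> C * \<alpha> powr p + \<delta> * \<beta> powr (r / d)"
    using Youngs_inequality_weighted \<delta> by metis
  obtain N where N: "\<forall>m\<ge>N. \<forall>n. (\<Sum>j\<in>{m..<n}. norm (a j) powr p) < e / (2 * (C + 1))"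
    using a[unfolded summable_Cauchy, rule_format, of "e / (2 * (C + 1))"] C e
    by (auto simp: p_def sum_nonneg)
  have "(\<Sum>j\<in>{m..<n}. norm (a j * x j ^ d)) < e"
    if x: "x \<in> lp_ball (ereal r) M" and m: "m \<ge> N" for x m n
  proof -
    have "(norm (x j) ^ d) powr (r / d) = norm (x j) powr r" for j
    proof (cases "x j = 0")
      case True
      then show ?thesis using d by simp
    next
      case False
      then show ?thesis using d by (simp add: powr_powr flip: powr_realpow)
    qed
    then have "(\<Sum>j\<in>{m..<n}. norm (a j * x j ^ d))
        \<le> (\<Sum>j\<in>{m..<n}. C * norm (a j) powr p + \<delta> * norm (x j) powr r)"
      by (intro sum_mono) (metis young norm_ge_zero zero_le_power norm_mult norm_power)
    also have "\<dots> = C * (\<Sum>j\<in>{m..<n}. norm (a j) powr p) + \<delta> * (\<Sum>j\<in>{m..<n}. norm (x j) powr r)"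
      by (simp add: sum.distrib sum_distrib_left)
    also have "\<dots> \<le> C * (e / (2 * (C + 1))) + \<delta> * M powr r"
    proof (intro add_mono mult_left_mono)
      show "(\<Sum>j\<in>{m..<n}. norm (a j) powr p) \<le> e / (2 * (C + 1))"
        using N m by (simp add: less_imp_le)
      have "(\<Sum>j\<in>{m..<n}. norm (x j) powr r) \<le> (\<Sum>j<n. norm (x j) powr r)"
        by (intro sum_mono2) auto
      also have "\<dots> \<le> M powr r"
        using x r M by (simp add: lp_ball_ereal)
      finally show "(\<Sum>j\<in>{m..<n}. norm (x j) powr r) \<le> M powr r" .
    qed (use C \<delta> in auto)
    also have "\<dots> < e / 2 + e / 2"
    proof (rule add_less_le_mono)
      show "C * (e / (2 * (C + 1))) < e / 2"
        using C e by (simp add: field_simps)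
      show "\<delta> * M powr r \<le> e / 2"
        using e Mr by (simp add: \<delta>_def field_simps)
    qed
    finally show ?thesis
      by simp
  qed
  then show ?thesis
    by blast
qed

lemma continuous_on_pairing_lp_ball:
  fixes a :: "nat \<Rightarrow> 'a::{real_normed_field,banach}"
  assumes d: "1 \<le> d" "ereal (real d) < q" and a: "in_lp (conj_exp q d) a" and M: "M \<ge> 0"
  shows "continuous_on (lp_ball q M) (\<lambda>x. pairing a x d)"
  unfolding pairing_def
proof (rule continuous_on_suminf_uniformly_small_tails)
  show "continuous_on (lp_ball q M) (\<lambda>x. a j * x j ^ d)" for j
    by (intro continuous_on_mult continuous_on_power continuous_on_const
        continuous_on_subset[OF continuous_on_product_coordinates]) simp
  fix e :: real
  assume e: "e > 0"
  show "\<exists>N. \<forall>x\<in>lp_ball q M. \<forall>m\<ge>N. \<forall>n. (\<Sum>j\<in>{m..<n}. norm (a j * x j ^ d)) < e"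
  proof (cases q)
    case (real r)
    have "summable (\<lambda>j. norm (a j) powr (r / (r - d)))"
      using a d by (simp add: real conj_exp_def in_lp_def)
    then show ?thesis
      unfolding real using d M e by (intro lp_ball_ereal_pairing_tails) (auto simp: real)
  next
    case PInf
    have "summable (\<lambda>j. norm (a j))"
      using a by (simp add: PInf conj_exp_def in_lp_def)
    then show ?thesis
      unfolding PInf using M e by (rule lp_ball_infinity_pairing_tails)
  qed (use d in auto)
qed

lemma continuous_on_prod_list:
  fixes f :: "'b \<Rightarrow> 'a::topological_space \<Rightarrow> 'c::real_normed_algebra_1"
  assumes "\<And>y. y \<in> set ys \<Longrightarrow> continuous_on B (f y)"
  shows "continuous_on B (\<lambda>x. prod_list (map (\<lambda>y. f y x) ys))"
  using assms by (induction ys) (auto intro: continuous_on_mult)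

lemma continuous_on_mult_poly:
  fixes a :: "nat \<Rightarrow> nat \<Rightarrow> 'a::real_normed_field"
  assumes "\<And>d. d \<in> {1..D} \<Longrightarrow> continuous_on B (\<lambda>x. pairing (a d) x d)"
  shows "continuous_on B (mult_poly D a)"
proof -
  have "continuous_on B (\<lambda>x. prod_list (map (\<lambda>d. pairing (a d) x d) ds))"
    if "ds \<in> tuples D k" for k ds
  proof (rule continuous_on_prod_list)
    fix d
    assume "d \<in> set ds"
    with that have "d \<in> {1..D}"
      using member_le_sum_list[of d ds] by (auto simp: tuples_def)
    then show "continuous_on B (\<lambda>x. pairing (a d) x d)"
      by (rule assms)
  qed
  then show ?thesis
    unfolding mult_poly_def[abs_def] by (intro continuous_on_sum) auto
qed

lemma compact_approximate_solutions_imp_solution: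
  fixes f :: "'i \<Rightarrow> 'a::t2_space \<Rightarrow> 'b::metric_space"
  assumes B: "compact B" and cont: "\<And>i. i \<in> I \<Longrightarrow> continuous_on B (f i)"
    and approx: "\<And>e S. e > 0 \<Longrightarrow> finite S \<Longrightarrow> S \<subseteq> I \<Longrightarrow> \<exists>x\<in>B. \<forall>i\<in>S. dist (f i x) (b i) \<le> e"
  shows "\<exists>x\<in>B. \<forall>i\<in>I. f i x = b i"
proof -
  define F where "F = (\<lambda>(i, e). B \<inter> f i -` cball (b i) e)"
  have "B \<inter> (\<Inter>ie\<in>I \<times> {0::real<..}. F ie) \<noteq> {}"
  proof (rule compact_imp_fip_image[OF B])
    show "closed (F ie)" if "ie \<in> I \<times> {0<..}" for ie
      using that by (clarsimp simp: F_def)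
        (intro continuous_closed_preimage cont compact_imp_closed[OF B] closed_cball)
    fix J :: "('i \<times> real) set"
    assume J: "finite J" "J \<subseteq> I \<times> {0<..}"
    define e where "e = Min (insert 1 (snd ` J))"
    have "e > 0"
      using J by (auto simp: e_def)
    then obtain x where x: "x \<in> B" "\<forall>i\<in>fst ` J. dist (f i x) (b i) \<le> e"
      using approx[of e "fst ` J"] J by force
    have "x \<in> F (i, e')" if "(i, e') \<in> J" for i e'
    proof -
      have "e \<le> e'"
        using J that unfolding e_def by (intro Min_le) force+
      then show ?thesis
        using x that by (force simp: F_def dist_commute)
    qed
    with x show "B \<inter> (\<Inter>ie\<in>J. F ie) \<noteq> {}"
      by auto
  qed
  then obtain x where "x \<in> B" and x: "\<And>i e. i \<in> I \<Longrightarrow> e > 0 \<Longrightarrow> dist (f i x) (b i) \<le> e"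
    by (force simp: F_def dist_commute)
  have "f i x = b i" if "i \<in> I" for i
    using x[OF that] by (metis dense not_le zero_less_dist_iff)
  with \<open>x \<in> B\<close> show ?thesis
    by blast
qed

lemma mult_poly_exact_solution:
  fixes a :: "'i \<Rightarrow> nat \<Rightarrow> nat \<Rightarrow> 'a::{real_normed_field,banach,heine_borel}"
  assumes D: "ereal (real D) < q"
    and a: "\<forall>i\<in>I. \<forall>d\<in>{1..D}. in_lp (conj_exp q d) (a i d)" and M: "M \<ge> 0"
    and approx: "\<forall>\<epsilon>>0. \<forall>S. finite S \<and> S \<subseteq> I \<longrightarrow>
         (\<exists>x. in_lp q x \<and> lp_norm q x \<le> M \<and> (\<forall>i\<in>S. norm (mult_poly D (a i) x - b i) \<le> \<epsilon>))"
  shows "\<exists>x. in_lp q x \<and> lp_norm q x \<le> M \<and> (\<forall>i\<in>I. mult_poly D (a i) x = b i)"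
proof -
  have "\<exists>x\<in>lp_ball q M. \<forall>i\<in>I. mult_poly D (a i) x = b i"
  proof (rule compact_approximate_solutions_imp_solution)
    have below_q: "ereal (real d) < q" if "d \<le> D" for d
      using D by (rule order.strict_trans1[rotated]) (simp add: that)
    from below_q[of 0] have "q > 0"
      by (simp flip: zero_ereal_def)
    then show "compact (lp_ball q M :: (nat \<Rightarrow> 'a) set)"
      using M by (rule compact_lp_ball)
    show "continuous_on (lp_ball q M) (mult_poly D (a i))" if "i \<in> I" for i
      using that a M below_q by (intro continuous_on_mult_poly continuous_on_pairing_lp_ball) auto
    show "\<exists>x\<in>lp_ball q M. \<forall>i\<in>S. dist (mult_poly D (a i) x) (b i) \<le> e"
      if "e > 0" "finite S" "S \<subseteq> I" for e S
      using approx that unfolding lp_ball_def dist_norm by blast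
  qed
  then show ?thesis
    by (auto simp: lp_ball_def)
qed

theorem theorem4:
  shows
  "(\<forall>(D::nat) (q::ereal) (I::'i set) (a::'i \<Rightarrow> nat \<Rightarrow> nat \<Rightarrow> real) (b::'i \<Rightarrow> real) (M::real).
      1 \<le> D \<longrightarrow> ereal (real D) < q \<longrightarrow> infinite I \<longrightarrow>
      (\<forall>i\<in>I. \<forall>d\<in>{1..D}. in_lp (conj_exp q d) (a i d)) \<longrightarrow> M > 0 \<longrightarrow>
      (\<forall>\<epsilon>>0. \<forall>S. finite S \<and> S \<subseteq> I \<longrightarrow>
         (\<exists>x. in_lp q x \<and> lp_norm q x \<le> M \<and> (\<forall>i\<in>S. norm (mult_poly D (a i) x - b i) \<le> \<epsilon>))) \<longrightarrow>
      (\<exists>x. in_lp q x \<and> lp_norm q x \<le> M \<and> (\<forall>i\<in>I. mult_poly D (a i) x = b i)))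
   \<and>
   (\<forall>(D::nat) (q::ereal) (I::'i set) (a::'i \<Rightarrow> nat \<Rightarrow> nat \<Rightarrow> complex) (b::'i \<Rightarrow> complex) (M::real).
      1 \<le> D \<longrightarrow> ereal (real D) < q \<longrightarrow> infinite I \<longrightarrow>
      (\<forall>i\<in>I. \<forall>d\<in>{1..D}. in_lp (conj_exp q d) (a i d)) \<longrightarrow> M > 0 \<longrightarrow>
      (\<forall>\<epsilon>>0. \<forall>S. finite S \<and> S \<subseteq> I \<longrightarrow>
         (\<exists>x. in_lp q x \<and> lp_norm q x \<le> M \<and> (\<forall>i\<in>S. norm (mult_poly D (a i) x - b i) \<le> \<epsilon>))) \<longrightarrow>
      (\<exists>x. in_lp q x \<and> lp_norm q x \<le> M \<and> (\<forall>i\<in>I. mult_poly D (a i) x = b i)))"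
  by (intro conjI allI impI; rule mult_poly_exact_solution; (assumption | simp))

end
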